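(* Consider a fair allocation instance with agents $a_1,\dots,a_n$, a finite set $M$ of $m$ indivisible goods, binary XOS valuations $v_1,\dots,v_n$, and entitlements $b_1,\dots,b_n>0$ with $\sum_{i}b_i=1$. Rename the agents so that $\frac{\lceil \mathsf{APS}_1/2\rceil}{b_1}\le \frac{\lceil \mathsf{APS}_2/2\rceil}{b_2}\le\cdots\le\frac{\lceil \mathsf{APS}_n/2\rceil}{b_n}$. Run the following procedure: set $R\gets M$; for $i=1,\dots,n$ in this order, if $v_i(R)\ge\lceil \mathsf{APS}_i/2\rceil$, give $a_i$ a bundle $A_i\subseteq R$ with $v_i(A_i)=|A_i|=\lceil \mathsf{APS}_i/2\rceil$ and set $R\gets R\setminus A_i$ (otherwise the procedure fails); finally allocate the goods remaining in $R$ arbitrarily. Then the procedure never fails, i.e. at every step $i$ such a bundle $A_i$ exists, and the resulting allocation $A$ of $M$ satisfies $v_i(A_i)\ge \frac12\mathsf{APS}_i$ for every agent $a_i$; in particular a $\frac12$-APS allocation always exists.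
   Context: A valuation $v:2^M\to\mathbb{R}_{\ge0}$ is XOS if there is a finite collection of additive functions $\{\ell_t\}_t$ with nonnegative item values such that $v(S)=\max_t\ell_t(S)$ for all $S\subseteq M$. It has binary marginals if $v(\varnothing)=0$ and $v(S\cup\{g\})-v(S)\in\{0,1\}$ for all $S\subseteq M$, $g\in M$; "binary XOS" means XOS with binary marginals. An allocation is a partition $(A_1,\dots,A_n)$ of $M$ with $A_i$ given to $a_i$. With $\mathcal{P}=\{p\in\mathbb{R}^m_{\ge0}:\sum_{g\in M}p_g=1\}$ and $p(S)=\sum_{g\in S}p_g$, the AnyPrice share of $a_i$ is $\mathsf{APS}_i=\min_{p\in\mathcal{P}}\max_{S\subseteq M,\ p(S)\le b_i}v_i(S)$. An allocation is $\alpha$-APS if $v_i(A_i)\ge\alpha\,\mathsf{APS}_i$ for all $i$. *)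

theory Defs
  imports Complex_Main
begin

definition additive_val :: "'g set \<Rightarrow> ('g \<Rightarrow> real) \<Rightarrow> ('g set \<Rightarrow> real)" where
  "additive_val M w = (\<lambda>S. \<Sum>g\<in>S. w g)"

definition is_XOS :: "'g set \<Rightarrow> ('g set \<Rightarrow> real) \<Rightarrow> bool" where
  "is_XOS M v \<longleftrightarrow> (\<exists>L :: ('g \<Rightarrow> real) set. finite L \<and> L \<noteq> {} \<and>
      (\<forall>w\<in>L. \<forall>g\<in>M. w g \<ge> 0) \<and>
      (\<forall>S. S \<subseteq> M \<longrightarrow> v S = Max ((\<lambda>w. additive_val M w S) ` L)))"

definition binary_marginals :: "'g set \<Rightarrow> ('g set \<Rightarrow> real) \<Rightarrow> bool" where
  "binary_marginals M v \<longleftrightarrow> v {} = 0 \<and>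
      (\<forall>S g. S \<subseteq> M \<longrightarrow> g \<in> M \<longrightarrow> v (S \<union> {g}) - v S \<in> {0, 1})"

definition binary_XOS :: "'g set \<Rightarrow> ('g set \<Rightarrow> real) \<Rightarrow> bool" where
  "binary_XOS M v \<longleftrightarrow> is_XOS M v \<and> binary_marginals M v"

definition price_vectors :: "'g set \<Rightarrow> ('g \<Rightarrow> real) set" where
  "price_vectors M = {p. (\<forall>g\<in>M. p g \<ge> 0) \<and> (\<Sum>g\<in>M. p g) = 1}"

text \<open>AnyPrice share: min over prices p of the max value of an affordable bundle.
  (The minimum is attained since the inner value ranges over a finite set; we write Inf.)\<close>
definition APS :: "'g set \<Rightarrow> ('g set \<Rightarrow> real) \<Rightarrow> real \<Rightarrow> real" where
  "APS M v b = Inf ((\<lambda>p. Max (v ` {S. S \<subseteq> M \<and> (\<Sum>g\<in>S. p g) \<le> b})) ` price_vectors M)"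

definition is_allocation :: "'g set \<Rightarrow> nat \<Rightarrow> (nat \<Rightarrow> 'g set) \<Rightarrow> bool" where
  "is_allocation M n A \<longleftrightarrow> (\<forall>i<n. A i \<subseteq> M) \<and>
      (\<forall>i<n. \<forall>j<n. i \<noteq> j \<longrightarrow> A i \<inter> A j = {}) \<and> (\<Union>i<n. A i) = M"

definition valid_step :: "'g set \<Rightarrow> (nat \<Rightarrow> 'g set \<Rightarrow> real) \<Rightarrow> (nat \<Rightarrow> real)
    \<Rightarrow> (nat \<Rightarrow> 'g set) \<Rightarrow> nat \<Rightarrow> bool" where
  "valid_step M v b A j \<longleftrightarrow> A j \<subseteq> M - (\<Union>k<j. A k) \<and>
      v j (A j) = real (card (A j)) \<and>
      real (card (A j)) = of_int \<lceil>APS M (v j) (b j) / 2\<rceil>"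

end

(*
  Binary marginals make every value a natural number bounded by the size of the bundle, and for a
  binary XOS valuation every set R with v(R) >= c contains a bundle T with v(T) = |T| = c: shrink R
  to a smallest set of the same value; removing any of its goods costs 1, so its supporting
  additive clause gives every good weight at least 1.

  Hence step i only needs v_i(R) >= c_i = ceil(APS_i / 2) for the remaining goods R = M - X.
  Pricing the taken goods X uniformly gives APS_i <= v_i(R) + floor(b_i |X|), and the ordering of
  the ratios c_j / b_j gives |X| <= sum_{j<i} c_j <= (c_i / b_i)(1 - b_i), so b_i |X| < c_i.
  If v_i(R) <= c_i - 1 this yields APS_i <= 2 c_i - 2, contradicting c_i < APS_i / 2 + 1.
  Finally v_i(A_i) = c_i >= APS_i / 2, and adding leftover goods does not decrease it.
*)
theory Submission
  imports Defs
begin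


lemma binary_marginals_insert:
  assumes "binary_marginals M v" "S \<subseteq> M" "g \<in> M"
  shows "v (insert g S) = v S \<or> v (insert g S) = v S + 1"
proof -
  have "v (S \<union> {g}) - v S \<in> {0, 1}" using assms unfolding binary_marginals_def by blast
  then show ?thesis by auto
qed

lemma binary_marginals_union:
  assumes bm: "binary_marginals M v" and "finite F" "S \<subseteq> M" "F \<subseteq> M"
  shows "\<exists>k::nat. k \<le> card F \<and> v (S \<union> F) = v S + k"
  using \<open>finite F\<close> \<open>F \<subseteq> M\<close>
proof (induction F)
  case empty
  show ?case by (intro exI[of _ 0]) simp
next
  case (insert g F)
  then obtain k :: nat where k: "k \<le> card F" "v (S \<union> F) = v S + k" by auto
  have "S \<union> F \<subseteq> M" "g \<in> M" using insert.prems \<open>S \<subseteq> M\<close> by auto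
  then have "v (insert g (S \<union> F)) = v (S \<union> F) \<or> v (insert g (S \<union> F)) = v (S \<union> F) + 1"
    by (rule binary_marginals_insert[OF bm])
  moreover have "S \<union> insert g F = insert g (S \<union> F)" by auto
  ultimately show ?case
  proof (elim disjE)
    assume "v (insert g (S \<union> F)) = v (S \<union> F)" "S \<union> insert g F = insert g (S \<union> F)"
    then show ?case using insert.hyps k by (intro exI[of _ k]) auto
  next
    assume "v (insert g (S \<union> F)) = v (S \<union> F) + 1" "S \<union> insert g F = insert g (S \<union> F)"
    then show ?case using insert.hyps k by (intro exI[of _ "Suc k"]) auto
  qed
qed

lemma binary_marginals_diff:
  assumes bm: "binary_marginals M v" and "finite T" "S \<subseteq> T" "T \<subseteq> M"
  obtains k :: nat where "k \<le> card (T - S)" "v T = v S + k"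
proof -
  have "S \<subseteq> M" "T - S \<subseteq> M" "finite (T - S)" using assms by auto
  from binary_marginals_union[OF bm this(3,1,2)] that show ?thesis
    using \<open>S \<subseteq> T\<close> by (auto simp: Un_absorb1)
qed

lemma binary_marginals_mono:
  assumes "binary_marginals M v" "finite T" "S \<subseteq> T" "T \<subseteq> M"
  shows "v S \<le> v T"
  using binary_marginals_diff[OF assms] by force

lemma binary_marginals_le_card_diff:
  assumes "binary_marginals M v" "finite T" "S \<subseteq> T" "T \<subseteq> M"
  shows "v T \<le> v S + card (T - S)"
  using binary_marginals_diff[OF assms] by force

lemma binary_marginals_nat_valued:
  assumes "binary_marginals M v" "finite T" "T \<subseteq> M"
  obtains k :: nat where "k \<le> card T" "v T = real k"
  using binary_marginals_union[OF assms(1,2), of "{}"] assms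
  by (auto simp: binary_marginals_def)

lemma is_XOS_supporting_clause:
  assumes "is_XOS M v" "S \<subseteq> M"
  obtains w where "v S = sum w S" "\<And>T. T \<subseteq> M \<Longrightarrow> sum w T \<le> v T"
proof -
  obtain L where L: "finite L" "L \<noteq> {}"
    and v: "\<And>T. T \<subseteq> M \<Longrightarrow> v T = Max ((\<lambda>w. additive_val M w T) ` L)"
    using assms(1) unfolding is_XOS_def by blast
  have "Max ((\<lambda>w. additive_val M w S) ` L) \<in> (\<lambda>w. additive_val M w S) ` L"
    using L by (intro Max_in) auto
  then obtain w where w: "w \<in> L" "v S = additive_val M w S"
    using v[OF assms(2)] by auto
  show ?thesis
  proof (rule that)
    show "v S = sum w S" using w(2) by (simp add: additive_val_def)
    show "sum w T \<le> v T" if "T \<subseteq> M" for T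
      using w(1) L(1) v[OF that] by (simp add: additive_val_def)
  qed
qed

lemma binary_XOS_subsets_of_tight_bundle:
  assumes bx: "binary_XOS M v" and "finite T" "T \<subseteq> M"
    and tight: "\<And>g. g \<in> T \<Longrightarrow> v (T - {g}) < v T"
    and "T' \<subseteq> T"
  shows "v T' = card T'"
proof -
  have bm: "binary_marginals M v" and xos: "is_XOS M v"
    using bx by (simp_all add: binary_XOS_def)
  obtain w where w: "v T = sum w T" "\<And>S. S \<subseteq> M \<Longrightarrow> sum w S \<le> v S"
    using is_XOS_supporting_clause[OF xos \<open>T \<subseteq> M\<close>] by blast
  have "w g \<ge> 1" if g: "g \<in> T" for g
  proof -
    have "insert g (T - {g}) = T" using g by blast
    moreover have "v (insert g (T - {g})) = v (T - {g}) \<or> v (insert g (T - {g})) = v (T - {g}) + 1"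
      by (rule binary_marginals_insert[OF bm]) (use \<open>T \<subseteq> M\<close> g in auto)
    ultimately have "v (T - {g}) = v T - 1" using tight[OF g] by auto
    moreover have "sum w T = w g + sum w (T - {g})"
      using g \<open>finite T\<close> by (simp add: sum.remove)
    moreover have "sum w (T - {g}) \<le> v (T - {g})" using w(2) \<open>T \<subseteq> M\<close> by blast
    ultimately show ?thesis using w(1) by linarith
  qed
  then have "card T' \<le> sum w T'"
    using sum_mono[of T' "\<lambda>_. 1" w] \<open>T' \<subseteq> T\<close> by auto
  also have "\<dots> \<le> v T'" using w(2) \<open>T' \<subseteq> T\<close> \<open>T \<subseteq> M\<close> by blast
  finally have "card T' \<le> v T'" .
  moreover have "finite T'" "T' \<subseteq> M"
    using \<open>T' \<subseteq> T\<close> \<open>T \<subseteq> M\<close> \<open>finite T\<close> finite_subset by auto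
  then obtain k where "k \<le> card T'" "v T' = real k"
    by (rule binary_marginals_nat_valued[OF bm])
  ultimately show ?thesis by simp
qed

lemma binary_XOS_exists_clean_bundle:
  assumes bx: "binary_XOS M v" and "finite M" "R \<subseteq> M" and c: "real c \<le> v R"
  obtains T where "T \<subseteq> R" "v T = card T" "card T = c"
proof -
  have bm: "binary_marginals M v" using bx by (simp add: binary_XOS_def)
  have "\<exists>T. (T \<subseteq> R \<and> v T = v R) \<and> (\<forall>T'. T' \<subseteq> R \<and> v T' = v R \<longrightarrow> card T \<le> card T')"
    by (rule ex_has_least_nat[of "\<lambda>T. T \<subseteq> R \<and> v T = v R" R card]) simp
  then obtain T where T: "T \<subseteq> R" "v T = v R"
    and min: "\<And>T'. T' \<subseteq> R \<Longrightarrow> v T' = v R \<Longrightarrow> card T \<le> card T'"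
    by blast
  have TM: "T \<subseteq> M" using T(1) \<open>R \<subseteq> M\<close> by (rule subset_trans)
  have finT: "finite T" using TM \<open>finite M\<close> by (rule finite_subset)
  have tight: "v (T - {g}) < v T" if "g \<in> T" for g
  proof -
    have "card (T - {g}) < card T" using finT that by (rule card_Diff1_less)
    then have "v (T - {g}) \<noteq> v T" using min[of "T - {g}"] T by auto
    moreover have "v (T - {g}) \<le> v T" using binary_marginals_mono[OF bm finT _ TM] by blast
    ultimately show ?thesis by simp
  qed
  have clean: "v T' = card T'" if "T' \<subseteq> T" for T'
    using tight by (intro binary_XOS_subsets_of_tight_bundle[OF bx finT TM _ that]) auto
  have "c \<le> card T" using clean[OF order_refl] T(2) c by simp
  then obtain T' where "T' \<subseteq> T" "card T' = c"
    by (metis obtain_subset_with_card_n)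
  then show ?thesis using that[of T'] clean[of T'] T(1) by auto
qed

abbreviation affordable :: "'g set \<Rightarrow> ('g \<Rightarrow> real) \<Rightarrow> real \<Rightarrow> 'g set set" where
  "affordable M p b \<equiv> {S. S \<subseteq> M \<and> (\<Sum>g\<in>S. p g) \<le> b}"

lemma finite_affordable: "finite M \<Longrightarrow> finite (affordable M p b)"
  by (rule finite_subset[of _ "Pow M"]) auto

lemma APS_ge_empty:
  assumes "finite M" "M \<noteq> {}" "b \<ge> 0"
  shows "v {} \<le> APS M v b"
proof -
  have "(\<lambda>g. 1 / real (card M)) \<in> price_vectors M"
    using assms by (simp add: price_vectors_def)
  moreover have "v {} \<le> Max (v ` affordable M p b)" for p
    using finite_affordable[OF \<open>finite M\<close>] \<open>b \<ge> 0\<close> by (intro Max_ge) auto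
  ultimately show ?thesis unfolding APS_def by (intro cInf_greatest) auto
qed

lemma APS_le:
  assumes "finite M" "b \<ge> 0" "p \<in> price_vectors M"
    and bound: "\<And>S. S \<subseteq> M \<Longrightarrow> (\<Sum>g\<in>S. p g) \<le> b \<Longrightarrow> v S \<le> K"
  shows "APS M v b \<le> K"
proof -
  have "v {} \<le> Max (v ` affordable M q b)" for q
    using finite_affordable[OF \<open>finite M\<close>] \<open>b \<ge> 0\<close> by (intro Max_ge) auto
  then have "APS M v b \<le> Max (v ` affordable M p b)"
    unfolding APS_def using \<open>p \<in> price_vectors M\<close>
    by (intro cInf_lower) (auto intro: bdd_belowI[of _ "v {}"])
  also have "\<dots> \<le> K"
    using finite_affordable[OF \<open>finite M\<close>] \<open>b \<ge> 0\<close> bound by (subst Max_le_iff) auto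
  finally show ?thesis .
qed

definition uniform_price :: "'g set \<Rightarrow> 'g \<Rightarrow> real" where
  "uniform_price X g = (if g \<in> X then 1 / real (card X) else 0)"

lemma sum_uniform_price:
  assumes "finite S"
  shows "(\<Sum>g\<in>S. uniform_price X g) = real (card (S \<inter> X)) / real (card X)"
proof -
  have "(\<Sum>g\<in>S. uniform_price X g) = (\<Sum>g\<in>S \<inter> X. uniform_price X g)"
    unfolding uniform_price_def using assms by (intro sum.mono_neutral_right) auto
  also have "\<dots> = (\<Sum>g\<in>S \<inter> X. 1 / real (card X))"
    unfolding uniform_price_def by (intro sum.cong) auto
  finally show ?thesis by simp
qed

lemma uniform_price_in_price_vectors:
  assumes "finite M" "X \<subseteq> M" "X \<noteq> {}"
  shows "uniform_price X \<in> price_vectors M"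
proof -
  have "finite X" using assms finite_subset by blast
  then show ?thesis
    using assms sum_uniform_price[of M X]
    by (auto simp: price_vectors_def uniform_price_def Int_absorb1)
qed

lemma APS_le_complement_plus_floor:
  assumes bm: "binary_marginals M v" and "finite M" "M \<noteq> {}" "b \<ge> 0" "X \<subseteq> M"
  shows "APS M v b \<le> v (M - X) + \<lfloor>b * card X\<rfloor>"
proof -
  obtain p where p: "p \<in> price_vectors M"
    and few: "\<And>S. S \<subseteq> M \<Longrightarrow> (\<Sum>g\<in>S. p g) \<le> b \<Longrightarrow> card (S \<inter> X) \<le> b * card X"
  proof (cases "X = {}")
    case True
    show ?thesis
    proof (rule that)
      show "uniform_price M \<in> price_vectors M"
        using uniform_price_in_price_vectors[OF \<open>finite M\<close> order_refl \<open>M \<noteq> {}\<close>] .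
    qed (use True in simp)
  next
    case False
    have cX: "real (card X) > 0"
      using False \<open>X \<subseteq> M\<close> \<open>finite M\<close> by (simp add: card_gt_0_iff finite_subset)
    have "card (S \<inter> X) \<le> b * card X" if "S \<subseteq> M" "(\<Sum>g\<in>S. uniform_price X g) \<le> b" for S
      using that sum_uniform_price[of S X] finite_subset[OF _ \<open>finite M\<close>] cX
      by (simp add: divide_le_eq mult.commute)
    then show ?thesis
      by (rule that[OF uniform_price_in_price_vectors[OF \<open>finite M\<close> \<open>X \<subseteq> M\<close> False]])
  qed
  show ?thesis
  proof (rule APS_le[OF \<open>finite M\<close> \<open>b \<ge> 0\<close> p])
    fix S assume S: "S \<subseteq> M" "(\<Sum>g\<in>S. p g) \<le> b"
    have fin: "finite S" using S \<open>finite M\<close> finite_subset by blast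
    have "S - S \<inter> (M - X) = S \<inter> X" using S by blast
    then have "v S \<le> v (S \<inter> (M - X)) + card (S \<inter> X)"
      using binary_marginals_le_card_diff[OF bm fin _ S(1), of "S \<inter> (M - X)"] by simp
    also have "\<dots> \<le> v (M - X) + \<lfloor>b * card X\<rfloor>"
    proof (rule add_mono)
      show "v (S \<inter> (M - X)) \<le> v (M - X)"
        using binary_marginals_mono[OF bm, of "M - X" "S \<inter> (M - X)"] \<open>finite M\<close> by simp
      have "int (card (S \<inter> X)) \<le> \<lfloor>b * card X\<rfloor>" using few[OF S] by (simp add: le_floor_iff)
      then show "real (card (S \<inter> X)) \<le> \<lfloor>b * card X\<rfloor>" by linarith
    qed
    finally show "v S \<le> v (M - X) + \<lfloor>b * card X\<rfloor>" .
  qed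
qed

lemma card_UN_le_weighted:
  fixes i :: nat
  assumes "\<And>j. j < i \<Longrightarrow> real (card (A j)) \<le> r * b j"
  shows "real (card (\<Union>j<i. A j)) \<le> r * (\<Sum>j<i. b j)"
proof -
  have "card (\<Union>j<i. A j) \<le> (\<Sum>j<i. card (A j))" by (rule card_UN_le) simp
  then have "real (card (\<Union>j<i. A j)) \<le> (\<Sum>j<i. real (card (A j)))"
    by (metis of_nat_le_iff of_nat_sum)
  also have "\<dots> \<le> (\<Sum>j<i. r * b j)" by (rule sum_mono) (use assms in simp)
  finally show ?thesis by (simp add: sum_distrib_left)
qed

lemma valid_steps_card_taken_le:
  assumes bpos: "\<And>j. j \<le> i \<Longrightarrow> b j > 0"
    and sorted: "\<And>j. j < i \<Longrightarrow>
      of_int \<lceil>APS M (v j) (b j) / 2\<rceil> / b j \<le> of_int \<lceil>APS M (v i) (b i) / 2\<rceil> / b i"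
    and steps: "\<And>j. j < i \<Longrightarrow> valid_step M v b A j"
  shows "real (card (\<Union>j<i. A j)) \<le> of_int \<lceil>APS M (v i) (b i) / 2\<rceil> / b i * (\<Sum>j<i. b j)"
proof (rule card_UN_le_weighted)
  fix j assume "j < i"
  have "real (card (A j)) = of_int \<lceil>APS M (v j) (b j) / 2\<rceil>"
    using steps[OF \<open>j < i\<close>] by (simp add: valid_step_def)
  then show "real (card (A j)) \<le> of_int \<lceil>APS M (v i) (b i) / 2\<rceil> / b i * b j"
    using sorted[OF \<open>j < i\<close>] bpos[of j] \<open>j < i\<close> by (simp add: pos_divide_le_eq)
qed

lemma greedy_step_feasible:
  assumes finM: "finite M" and neM: "M \<noteq> {}" and bx: "binary_XOS M (v i)"
    and bpos: "\<And>j. j \<le> i \<Longrightarrow> b j > 0" and budget: "(\<Sum>j<i. b j) + b i \<le> 1"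
    and sorted: "\<And>j. j < i \<Longrightarrow>
      of_int \<lceil>APS M (v j) (b j) / 2\<rceil> / b j \<le> of_int \<lceil>APS M (v i) (b i) / 2\<rceil> / b i"
    and steps: "\<And>j. j < i \<Longrightarrow> valid_step M v b A j"
  shows "\<exists>Ai. Ai \<subseteq> M - (\<Union>j<i. A j) \<and> v i Ai = real (card Ai) \<and>
      real (card Ai) = of_int \<lceil>APS M (v i) (b i) / 2\<rceil>"
proof -
  define c where "c = \<lceil>APS M (v i) (b i) / 2\<rceil>"
  define X where "X = (\<Union>j<i. A j)"
  have bm: "binary_marginals M (v i)" using bx by (simp add: binary_XOS_def)
  have bi: "b i > 0" using bpos by simp
  have "A j \<subseteq> M" if "j < i" for j using steps[OF that] by (auto simp: valid_step_def)
  then have XM: "X \<subseteq> M" unfolding X_def by blast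
  have "0 \<le> APS M (v i) (b i)"
    using APS_ge_empty[OF finM neM, of "b i" "v i"] bi bm by (simp add: binary_marginals_def)
  then have c0: "c \<ge> 0" unfolding c_def by simp
  have "real (card X) \<le> c / b i * (\<Sum>j<i. b j)"
    using valid_steps_card_taken_le[OF bpos sorted steps] unfolding X_def c_def .
  also have "\<dots> \<le> c / b i * (1 - b i)"
    using budget c0 bi by (intro mult_left_mono) auto
  finally have taken: "b i * card X \<le> c * (1 - b i)" using bi by (simp add: field_simps)
  have "finite (M - X)" using finM by simp
  then obtain k :: nat where k: "k \<le> card (M - X)" "v i (M - X) = real k"
    by (rule binary_marginals_nat_valued[OF bm _ Diff_subset])
  have "c \<le> int k"
  proof (rule ccontr)
    assume "\<not> c \<le> int k"
    then have "int k \<le> c - 1" "c \<ge> 1" by auto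
    then have "real k \<le> of_int c - 1" "c * b i > 0" using bi by simp_all
    then have "b i * card X < c" using taken by (simp add: algebra_simps)
    then have "\<lfloor>b i * card X\<rfloor> \<le> c - 1" by (simp add: floor_less_iff)
    then have "real_of_int \<lfloor>b i * card X\<rfloor> \<le> of_int c - 1" by simp
    moreover have "APS M (v i) (b i) \<le> v i (M - X) + \<lfloor>b i * card X\<rfloor>"
      using bi by (intro APS_le_complement_plus_floor[OF bm finM neM _ XM]) simp
    moreover have "of_int c - 1 < APS M (v i) (b i) / 2"
      using ceiling_correct[of "APS M (v i) (b i) / 2"] unfolding c_def by linarith
    ultimately show False using \<open>real k \<le> of_int c - 1\<close> k(2) by linarith
  qed
  then have "real (nat c) \<le> v i (M - X)" using k(2) c0 by simp
  then obtain T where "T \<subseteq> M - X" "v i T = card T" "card T = nat c"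
    by (rule binary_XOS_exists_clean_bundle[OF bx finM Diff_subset])
  then show ?thesis using c0 unfolding X_def c_def by (intro exI[of _ T]) simp
qed

lemma valid_step_half_APS:
  assumes "valid_step M v b A i" "binary_marginals M (v i)" "finite M" "A i \<subseteq> B" "B \<subseteq> M"
  shows "APS M (v i) (b i) / 2 \<le> v i B"
proof -
  have "APS M (v i) (b i) / 2 \<le> of_int \<lceil>APS M (v i) (b i) / 2\<rceil>" by simp
  also have "\<dots> = v i (A i)" using assms(1) by (simp add: valid_step_def)
  also have "\<dots> \<le> v i B"
    using binary_marginals_mono[OF assms(2) finite_subset[OF assms(5,3)] assms(4,5)] .
  finally show ?thesis .
qed

lemma greedy_run_exists:
  assumes feasible: "\<forall>i<n. \<forall>A. (\<forall>j<i. valid_step M v b A j) \<longrightarrow>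
      (\<exists>Ai. Ai \<subseteq> M - (\<Union>j<i. A j) \<and> v i Ai = real (card Ai) \<and>
            real (card Ai) = of_int \<lceil>APS M (v i) (b i) / 2\<rceil>)"
  shows "\<exists>A. \<forall>j<n. valid_step M v b A j"
proof -
  have "\<exists>A. \<forall>j<k. valid_step M v b A j" if "k \<le> n" for k
    using that
  proof (induction k)
    case 0
    show ?case by simp
  next
    case (Suc k)
    then obtain A where A: "\<forall>j<k. valid_step M v b A j" by auto
    then obtain Ak where Ak: "Ak \<subseteq> M - (\<Union>j<k. A j)" "v k Ak = real (card Ak)"
      "real (card Ak) = of_int \<lceil>APS M (v k) (b k) / 2\<rceil>"
      using feasible Suc.prems by (meson Suc_le_lessD)
    have prefix: "(\<Union>l<j. (A(k := Ak)) l) = (\<Union>l<j. A l)" if "j \<le> k" for j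
      using that by auto
    have "valid_step M v b (A(k := Ak)) j" if "j < Suc k" for j
      using that A Ak prefix[of j] by (cases "j = k") (auto simp: valid_step_def)
    then show ?case by blast
  qed
  then show ?thesis by blast
qed

lemma exists_allocation_extending:
  assumes "n > 0" and disj: "\<And>j. j < n \<Longrightarrow> A j \<subseteq> M - (\<Union>k<j. A k)"
  shows "\<exists>B. is_allocation M n B \<and> (\<forall>i<n. A i \<subseteq> B i)"
proof -
  define U where "U = (\<Union>j<n. A j)"
  define B where "B = A(n - 1 := A (n - 1) \<union> (M - U))"
  have later: "A i \<inter> A j = {}" if "j < i" "i < n" for i j
  proof -
    have "A j \<subseteq> (\<Union>k<i. A k)" using that(1) by blast
    then show ?thesis using disj[OF that(2)] by blast
  qed
  have disjA: "A i \<inter> A j = {}" if "i < n" "j < n" "i \<noteq> j" for i j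
  proof (cases "j < i")
    case True
    then show ?thesis using later[of j i] that by blast
  next
    case False
    then have "i < j" using that(3) by simp
    then show ?thesis using later[of i j] that by blast
  qed
  have disjU: "A i \<inter> (M - U) = {}" if "i < n" for i
    using that unfolding U_def by blast
  have AB: "A i \<subseteq> B i" "B i \<subseteq> M" if "i < n" for i
    using disj[OF that] unfolding B_def by auto
  have "B i \<inter> B j = {}" if "i < n" "j < n" "i \<noteq> j" for i j
  proof (cases "i = n - 1 \<or> j = n - 1")
    case True
    then show ?thesis
      using disjA[OF that] disjU[OF that(1)] disjU[OF that(2)] that(3)
      unfolding B_def by auto
  next
    case False
    then show ?thesis using disjA[OF that] unfolding B_def by simp
  qed
  moreover have "(\<Union>i<n. B i) = M"
  proof
    show "(\<Union>i<n. B i) \<subseteq> M" using AB(2) by blast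
    show "M \<subseteq> (\<Union>i<n. B i)"
    proof
      fix x assume "x \<in> M"
      show "x \<in> (\<Union>i<n. B i)"
      proof (cases "x \<in> U")
        case True
        then obtain j where "j < n" "x \<in> A j" unfolding U_def by blast
        then show ?thesis using AB(1)[of j] by blast
      next
        case False
        then have "x \<in> B (n - 1)" using \<open>x \<in> M\<close> unfolding B_def by simp
        moreover have "n - 1 < n" using \<open>n > 0\<close> by simp
        ultimately show ?thesis by blast
      qed
    qed
  qed
  ultimately have "is_allocation M n B" using AB(2) unfolding is_allocation_def by blast
  then show ?thesis using AB(1) by blast
qed

theorem theorem1:
  fixes M :: "'g set" and n :: nat
    and v :: "nat \<Rightarrow> 'g set \<Rightarrow> real" and b :: "nat \<Rightarrow> real"
  assumes finM: "finite M" and neM: "M \<noteq> {}"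
    and val: "\<forall>i<n. binary_XOS M (v i)"
    and bpos: "\<forall>i<n. b i > 0" and bsum: "(\<Sum>i<n. b i) = 1"
    and sorted: "\<forall>i j. i \<le> j \<longrightarrow> j < n \<longrightarrow>
        of_int \<lceil>APS M (v i) (b i) / 2\<rceil> / b i \<le> of_int \<lceil>APS M (v j) (b j) / 2\<rceil> / b j"
  shows "(\<forall>i<n. \<forall>A. (\<forall>j<i. valid_step M v b A j) \<longrightarrow>
            (\<exists>Ai. Ai \<subseteq> M - (\<Union>j<i. A j) \<and> v i Ai = real (card Ai) \<and>
                  real (card Ai) = of_int \<lceil>APS M (v i) (b i) / 2\<rceil>))
       \<and> (\<forall>A B. (\<forall>j<n. valid_step M v b A j) \<and> is_allocation M n B \<and> (\<forall>i<n. A i \<subseteq> B i)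
            \<longrightarrow> (\<forall>i<n. v i (B i) \<ge> APS M (v i) (b i) / 2))
       \<and> (\<exists>B. is_allocation M n B \<and> (\<forall>i<n. v i (B i) \<ge> APS M (v i) (b i) / 2))"
proof -
  have budget: "(\<Sum>j<i. b j) + b i \<le> 1" if "i < n" for i
  proof -
    have "(\<Sum>j<Suc i. b j) \<le> (\<Sum>j<n. b j)"
      using that bpos by (intro sum_mono2) auto
    then show ?thesis using bsum by simp
  qed
  have feasible: "\<forall>i<n. \<forall>A. (\<forall>j<i. valid_step M v b A j) \<longrightarrow>
      (\<exists>Ai. Ai \<subseteq> M - (\<Union>j<i. A j) \<and> v i Ai = real (card Ai) \<and>
            real (card Ai) = of_int \<lceil>APS M (v i) (b i) / 2\<rceil>)"
    using val bpos sorted budget by (intro allI impI greedy_step_feasible[OF finM neM]) auto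
  have guarantee: "\<forall>A B. (\<forall>j<n. valid_step M v b A j) \<and> is_allocation M n B \<and> (\<forall>i<n. A i \<subseteq> B i)
      \<longrightarrow> (\<forall>i<n. v i (B i) \<ge> APS M (v i) (b i) / 2)"
    using valid_step_half_APS[OF _ _ finM] val by (auto simp: binary_XOS_def is_allocation_def)
  obtain A where A: "\<forall>j<n. valid_step M v b A j"
    using greedy_run_exists[OF feasible] by blast
  have "n > 0" using bsum by (cases n) auto
  then obtain B where "is_allocation M n B" "\<forall>i<n. A i \<subseteq> B i"
    using exists_allocation_extending[of n A M] A by (auto simp: valid_step_def)
  then show ?thesis using feasible guarantee A by blast
qed

end
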